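(* Let $d$ be a positive integer. For every point $z\in\mathbb{P}^d_\circ$ there exist a set $\mathcal{K}$ of $d$ points of $\mathbb{P}^d_\circ$, all of $1$-norm $\|z\|_1$, and a partition of $\mathcal{K}$ into $d/|C\cdot z|$ subsets, each of cardinality $|C\cdot z|$, such that every subset $\mathcal{L}$ of this partition satisfies $$\kappa(C\cdot z)=\sum_{x\in\mathcal{L}}|x_i|\quad\text{for every } i\in\{1,\dots,d\},$$ and, for each such $\mathcal{L}$, there exists a point of $\mathbb{P}^d_\circ$ whose orbit under $C$ contains $\mathcal{L}$.
   Context: A point of $\mathbb{Z}^d$ is primitive if its coordinates are relatively prime; $\mathbb{P}^d_\circ$ denotes the set of primitive points of $\mathbb{Z}^d$ whose first non-zero coordinate is positive. For a finite $\mathcal{X}\subset\mathbb{R}^d$, $\kappa(\mathcal{X})=\max_{1\le i\le d}\sum_{x\in\mathcal{X}}|x_i|$. Let $\sigma:\mathbb{R}^d\to\mathbb{R}^d$ be the cyclic coordinate shift $\sigma(x_1,\dots,x_d)=(x_d,x_1,\dots,x_{d-1})$, and let $\tau(x)=\sigma(x)$ if $x_d\ge 0$ and $\tau(x)=-\sigma(x)$ otherwise. $C$ is the cyclic group (of order $d$) generated by $\tau$, and $C\cdot z=\{g(z):g\in C\}$ is the orbit of $z$; it is a subset of $\mathbb{P}^d_\circ$ when $z\in\mathbb{P}^d_\circ$. *)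

theory Defs
  imports Main "HOL-Library.Disjoint_Sets"
begin

text \<open>Points of Z^d are represented as integer lists of length d;
  coordinate x_i (i = 1..d) is x ! (i - 1).\<close>

definition primitive_pts :: "nat \<Rightarrow> int list set" where
  "primitive_pts d = {x. length x = d \<and> Gcd (set x) = 1}"

definition prim_circ :: "nat \<Rightarrow> int list set" where
  "prim_circ d = {x \<in> primitive_pts d.
      \<exists>i<d. x ! i > 0 \<and> (\<forall>j<i. x ! j = 0)}"

definition norm1 :: "int list \<Rightarrow> int" where
  "norm1 x = sum_list (map abs x)"

definition kappa :: "nat \<Rightarrow> int list set \<Rightarrow> int" where
  "kappa d X = Max ((\<lambda>i. \<Sum>x\<in>X. \<bar>x ! i\<bar>) ` {..<d})"

definition sigma :: "int list \<Rightarrow> int list" where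
  "sigma x = last x # butlast x"

definition tau :: "int list \<Rightarrow> int list" where
  "tau x = (if last x \<ge> 0 then sigma x else map uminus (sigma x))"

text \<open>Orbit C.z of z under the cyclic group C generated by tau.\<close>
definition orbit :: "int list \<Rightarrow> int list set" where
  "orbit z = range (\<lambda>k. (tau ^^ k) z)"

end

theory Submission
  imports Defs
begin

(* Let p = |C.z|. Then p divides d, tau^p z = z, and the entrywise absolute value |z| is invariant
   under the cyclic shift by p. Hence for every x with |x| = |z|, the first p tau-iterates of x have
   the same column sums |x_i| as the orbit of z, and these do not depend on i: they all equal
   kappa(C.z). It therefore suffices to find d/p points w_j of P^d_circ with |w_j| = |z| whose first
   p tau-iterates are distinct and pairwise disjoint across j.
   If p = d, take z itself. Otherwise let a be the leading index of z and b = a + p mod d, so that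
   z_b is non-zero. If z has a third non-zero entry, negating the b-th entry of |z| gives a point
   with one negative and at least two positive entries; no non-trivial signed rotation fixes it, so
   its tau-orbit has d elements and splits into d/p runs of p consecutive iterates. If a and b are
   the only non-zero entries, then d = 2p, and |z| together with |z| with its b-th entry negated
   do the job: their orbits are disjoint because tau preserves whether all entries of a point have
   the same sign. *)

section \<open>Residues and periods of iterated functions\<close>

lemma add_mod_left_cancel:
  fixes a r s d :: nat
  assumes "(a + r) mod d = (a + s) mod d" "r < d" "s < d"
  shows "r = s"
proof -
  have "n = m" if "m \<le> n" "n < d" "(a + m) mod d = (a + n) mod d" for m n
  proof -
    have "d dvd n - m"
      using that mod_eq_dvd_iff_nat[of "a + m" "a + n" d] by simp
    then have "n - m = 0"
      using that(2) by (metis diff_le_self dvd_imp_le gr0I leD le_less_trans)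
    then show ?thesis
      using that(1) by simp
  qed
  then show ?thesis
    using assms by (metis nat_le_linear)
qed

lemma add_mod_neq_self:
  fixes a p d :: nat
  assumes "a < d" "0 < p" "p < d"
  shows "(a + p) mod d \<noteq> a"
proof
  assume "(a + p) mod d = a"
  then have "(a + p) mod d = (a + 0) mod d"
    using assms(1) by simp
  then have "p = 0"
    by (rule add_mod_left_cancel) (use assms in auto)
  then show False
    using assms(2) by simp
qed

lemma add_mult_less:
  fixes k j p q :: nat
  assumes "k < p" "j < q"
  shows "k + j * p < q * p"
proof -
  have "k + j * p < Suc j * p"
    using assms(1) by simp
  also have "\<dots> \<le> q * p"
    using assms(2) mult_le_mono1[of "Suc j" q p] by simp
  finally show ?thesis .
qed

lemma add_mult_eq_imp_eq:
  fixes k k' j j' p :: nat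
  assumes "k + j * p = k' + j' * p" "k < p" "k' < p"
  shows "k = k'" "j = j'"
proof -
  have "(k + j * p) div p = (k' + j' * p) div p"
    using assms(1) by simp
  then show "j = j'"
    using assms(2,3) by simp
  then show "k = k'"
    using assms(1) by simp
qed

lemma funpow_least_period:
  assumes "(f ^^ n) x = x" "0 < n"
  obtains p where "0 < p" "p dvd n" "(f ^^ p) x = x" "inj_on (\<lambda>k. (f ^^ k) x) {..<p}"
    "range (\<lambda>k. (f ^^ k) x) = (\<lambda>k. (f ^^ k) x) ` {..<p}"
proof -
  define p where "p = (LEAST p. 0 < p \<and> (f ^^ p) x = x)"
  have p: "0 < p" "(f ^^ p) x = x"
    using LeastI[of "\<lambda>p. 0 < p \<and> (f ^^ p) x = x", OF conjI[OF assms(2,1)]]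
    by (simp_all add: p_def)
  have least: "(f ^^ m) x \<noteq> x" if "0 < m" "m < p" for m
    using that not_less_Least by (fastforce simp: p_def)
  have "p dvd n"
    using least[of "n mod p"] funpow_mod_eq[where f = f and n = p and x = x and m = n] p assms(1)
    by (auto simp: dvd_eq_mod_eq_0)
  moreover have "inj_on (\<lambda>k. (f ^^ k) x) {..<p}"
    using inj_on_funpow_least[where f = f and n = p and s = x] p least
    by (simp add: lessThan_atLeast0)
  moreover have "range (\<lambda>k. (f ^^ k) x) = (\<lambda>k. (f ^^ k) x) ` {..<p}"
    using p funpow_mod_eq[where f = f and n = p and x = x]
    by (auto intro!: image_eqI[where x = "_ mod p"])
  ultimately show thesis
    using p that by blast
qed

section \<open>The cyclic shifts sigma and tau\<close>

lemma sigma_not_Nil [simp]: "sigma x \<noteq> []"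
  by (simp add: sigma_def)

lemma length_sigma [simp]: "x \<noteq> [] \<Longrightarrow> length (sigma x) = length x"
  by (simp add: sigma_def)

lemma rotate1_sigma: "x \<noteq> [] \<Longrightarrow> rotate1 (sigma x) = x"
  by (simp add: sigma_def)

lemma set_sigma: "x \<noteq> [] \<Longrightarrow> set (sigma x) = set x"
  by (metis rotate1_sigma set_rotate1)

lemma sum_list_sigma: "x \<noteq> [] \<Longrightarrow> sum_list (sigma x) = sum_list x"
  by (metis append_butlast_last_id sigma_def sum_list.Cons sum_list_append
      sum_list.Nil add.commute add_0_right)

lemma nth_sigma_Suc: "Suc i < length x \<Longrightarrow> sigma x ! Suc i = x ! i"
  by (simp add: sigma_def nth_butlast)

lemma tau_not_Nil [simp]: "tau x \<noteq> []"
  by (simp add: tau_def)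

lemma map_abs_tau: "x \<noteq> [] \<Longrightarrow> map abs (tau x) = sigma (map abs x)"
  by (simp add: tau_def sigma_def last_map map_butlast comp_def)

lemma rotate1_tau: "x \<noteq> [] \<Longrightarrow> \<exists>\<epsilon>. \<bar>\<epsilon>\<bar> = 1 \<and> rotate1 (tau x) = map ((*) \<epsilon>) x"
  by (rule exI[of _ "if last x \<ge> 0 then 1 else -1"])
    (simp add: tau_def rotate1_sigma rotate1_map map_idI)

lemma funpow_tau_not_Nil: "x \<noteq> [] \<Longrightarrow> (tau ^^ k) x \<noteq> []"
  by (cases k) simp_all

lemma length_funpow_tau [simp]: "x \<noteq> [] \<Longrightarrow> length ((tau ^^ k) x) = length x"
  by (induction k) (simp_all add: tau_def funpow_tau_not_Nil)

lemma map_abs_funpow_tau: "x \<noteq> [] \<Longrightarrow> map abs ((tau ^^ k) x) = (sigma ^^ k) (map abs x)"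
  by (induction k) (simp_all add: map_abs_tau funpow_tau_not_Nil)

lemma norm1_funpow_tau: "x \<noteq> [] \<Longrightarrow> norm1 ((tau ^^ k) x) = norm1 x"
proof (induction k)
  case (Suc k)
  then show ?case
    using map_abs_tau[OF funpow_tau_not_Nil] sum_list_sigma
    by (simp add: norm1_def funpow_tau_not_Nil)
qed simp

lemma rotate_funpow_tau: "x \<noteq> [] \<Longrightarrow> \<exists>\<epsilon>. \<bar>\<epsilon>\<bar> = 1 \<and> rotate k ((tau ^^ k) x) = map ((*) \<epsilon>) x"
proof (induction k)
  case (Suc k)
  then obtain \<epsilon> where \<epsilon>: "\<bar>\<epsilon>\<bar> = 1" "rotate k ((tau ^^ k) x) = map ((*) \<epsilon>) x" by blast
  obtain \<delta> where \<delta>: "\<bar>\<delta>\<bar> = 1" "rotate1 (tau ((tau ^^ k) x)) = map ((*) \<delta>) ((tau ^^ k) x)"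
    using rotate1_tau funpow_tau_not_Nil[OF Suc.prems] by blast
  have "rotate (Suc k) ((tau ^^ Suc k) x) = map ((*) \<delta>) (rotate k ((tau ^^ k) x))"
    using \<delta>(2) by (simp add: rotate1_rotate_swap rotate_map)
  also have "\<dots> = map ((*) (\<delta> * \<epsilon>)) x"
    using \<epsilon>(2) by (simp add: mult.assoc)
  finally show ?case
    using \<epsilon>(1) \<delta>(1) by (intro exI[of _ "\<delta> * \<epsilon>"]) (simp add: abs_mult)
qed (auto intro: exI[of _ 1] simp: map_idI)

lemma map_mult_sign_cancel:
  fixes \<epsilon> :: int
  assumes "\<bar>\<epsilon>\<bar> = 1"
  shows "map ((*) \<epsilon>) (map ((*) \<epsilon>) x) = x"
proof -
  have "\<epsilon> = 1 \<or> \<epsilon> = -1"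
    using assms by auto
  then show ?thesis
    by (auto simp: comp_def)
qed

lemma inj_on_funpow_tau:
  assumes "x \<noteq> []"
    and no_symmetry: "\<And>r \<epsilon>. 0 < r \<Longrightarrow> r < n \<Longrightarrow> \<bar>\<epsilon>\<bar> = 1 \<Longrightarrow> rotate r x \<noteq> map ((*) \<epsilon>) x"
  shows "inj_on (\<lambda>k. (tau ^^ k) x) {..<n}"
proof -
  have no_collision: False if "j < i" "i < n" "(tau ^^ i) x = (tau ^^ j) x" for i j
  proof -
    obtain \<epsilon> where \<epsilon>: "\<bar>\<epsilon>\<bar> = 1" "rotate i ((tau ^^ i) x) = map ((*) \<epsilon>) x"
      using rotate_funpow_tau[OF assms(1)] by blast
    obtain \<delta> where \<delta>: "\<bar>\<delta>\<bar> = 1" "rotate j ((tau ^^ j) x) = map ((*) \<delta>) x"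
      using rotate_funpow_tau[OF assms(1)] by blast
    have "map ((*) \<epsilon>) x = rotate (i - j) (rotate j ((tau ^^ j) x))"
      using \<epsilon>(2) that by (simp add: rotate_rotate)
    also have "\<dots> = map ((*) \<delta>) (rotate (i - j) x)"
      using \<delta>(2) by (simp add: rotate_map)
    finally have "rotate (i - j) x = map ((*) \<delta>) (map ((*) \<epsilon>) x)"
      by (metis map_mult_sign_cancel[OF \<delta>(1)])
    then have "rotate (i - j) x = map ((*) (\<delta> * \<epsilon>)) x"
      by (simp add: comp_def mult.assoc)
    then show False
      using no_symmetry[of "i - j" "\<delta> * \<epsilon>"] that \<epsilon>(1) \<delta>(1) by (simp add: abs_mult)
  qed
  show ?thesis
  proof (rule inj_onI)
    fix i j assume "i \<in> {..<n}" "j \<in> {..<n}" "(tau ^^ i) x = (tau ^^ j) x"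
    then show "i = j"
      using no_collision[of j i] no_collision[of i j] by (cases i j rule: linorder_cases) auto
  qed
qed

definition sign_coherent :: "int list \<Rightarrow> bool" where
  "sign_coherent x \<longleftrightarrow> (\<forall>u\<in>set x. \<forall>v\<in>set x. 0 \<le> u * v)"

lemma sign_coherent_funpow_tau: "x \<noteq> [] \<Longrightarrow> sign_coherent ((tau ^^ k) x) = sign_coherent x"
proof -
  have "sign_coherent (tau y) = sign_coherent y" if ne: "y \<noteq> []" for y
  proof -
    consider "set (tau y) = set y" | "set (tau y) = uminus ` set y"
      using set_sigma[OF ne] by (cases "last y \<ge> 0") (simp_all add: tau_def)
    then show ?thesis
      by cases (simp_all add: sign_coherent_def)
  qed
  then show "x \<noteq> [] \<Longrightarrow> ?thesis"
    by (induction k) (simp_all add: funpow_tau_not_Nil)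
qed

lemma nth_mod_if_rotate_eq:
  assumes "rotate r x = map ((*) \<epsilon>) x" "m < length x"
  shows "x ! ((m + r) mod length x) = \<epsilon> * x ! m"
  using arg_cong[OF assms(1), of "\<lambda>y. y ! m"] assms(2) by (simp add: nth_rotate add.commute)

lemma abs_nth_eq_if_map_abs_eq: "map abs x = map abs z \<Longrightarrow> m < length z \<Longrightarrow> \<bar>x ! m\<bar> = \<bar>z ! m\<bar>"
  by (metis length_map nth_map)

lemma abs_nth_add_period:
  assumes period: "(tau ^^ p) z = z" and "m < length z"
  shows "\<bar>z ! ((m + p) mod length z)\<bar> = \<bar>z ! m\<bar>"
proof -
  have "z \<noteq> []"
    using \<open>m < length z\<close> by auto
  then obtain \<epsilon> where "\<bar>\<epsilon>\<bar> = 1" "rotate p z = map ((*) \<epsilon>) z"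
    using rotate_funpow_tau[of z p] period by auto
  then show ?thesis
    using nth_mod_if_rotate_eq[of p z \<epsilon> m] \<open>m < length z\<close> by (simp add: abs_mult)
qed

section \<open>Primitive points and their orbits\<close>

lemma prim_circ_length: "x \<in> prim_circ d \<Longrightarrow> length x = d"
  by (simp add: prim_circ_def primitive_pts_def)

lemma prim_circ_not_Nil: "x \<in> prim_circ d \<Longrightarrow> x \<noteq> []"
  by (auto simp: prim_circ_def primitive_pts_def)

lemma Gcd_set_map_abs: "Gcd (set (map abs x)) = Gcd (set (x :: int list))"
  using Gcd_image_normalize[of "set x"] by simp

lemma uminus_notin_prim_circ:
  assumes "x \<in> prim_circ d"
  shows "map uminus x \<notin> prim_circ d"
proof
  assume "map uminus x \<in> prim_circ d"
  then obtain k where k: "k < d" "x ! k < 0" "\<forall>j<k. x ! j = 0"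
    using prim_circ_length[OF assms] by (auto simp: prim_circ_def)
  obtain i where i: "i < d" "x ! i > 0" "\<forall>j<i. x ! j = 0"
    using assms by (auto simp: prim_circ_def)
  show False
    using i k by (cases i k rule: linorder_cases) auto
qed

lemma tau_in_prim_circ:
  assumes "x \<in> prim_circ d"
  shows "tau x \<in> prim_circ d"
proof -
  have ne: "x \<noteq> []" and len: "length x = d"
    using assms by (simp_all add: prim_circ_not_Nil prim_circ_length)
  obtain i where i: "i < d" "x ! i > 0" "\<forall>j<i. x ! j = 0"
    using assms by (auto simp: prim_circ_def)
  have "Gcd (set (tau x)) = Gcd (set x)"
    by (metis Gcd_set_map_abs map_abs_tau[OF ne] set_sigma ne Nil_is_map_conv)
  moreover have "\<exists>i<d. tau x ! i > 0 \<and> (\<forall>j<i. tau x ! j = 0)"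
  proof (cases "last x = 0")
    case True
    then have "Suc i < d"
      using i ne len by (metis Suc_lessI diff_Suc_1 last_conv_nth less_irrefl)
    moreover have "tau x ! Suc j = x ! j" if "Suc j < d" for j
      using True that len nth_sigma_Suc[of j x] by (simp add: tau_def)
    moreover have "tau x ! 0 = 0"
      using True by (simp add: tau_def sigma_def)
    ultimately show ?thesis
      using i by (intro exI[of _ "Suc i"]) (auto simp: less_Suc_eq_0_disj)
  next
    case False
    then show ?thesis
      using i by (intro exI[of _ 0]) (auto simp: tau_def sigma_def)
  qed
  ultimately show ?thesis
    using assms len ne by (simp add: prim_circ_def primitive_pts_def tau_def)
qed

lemma funpow_tau_in_prim_circ: "x \<in> prim_circ d \<Longrightarrow> (tau ^^ k) x \<in> prim_circ d"
  by (induction k) (simp_all add: tau_in_prim_circ)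

lemma funpow_tau_self:
  assumes "x \<in> prim_circ d"
  shows "(tau ^^ d) x = x"
proof -
  obtain \<epsilon> where \<epsilon>: "\<bar>\<epsilon>\<bar> = 1" "rotate d ((tau ^^ d) x) = map ((*) \<epsilon>) x"
    using rotate_funpow_tau[OF prim_circ_not_Nil[OF assms]] by blast
  have tau_d: "(tau ^^ d) x = map ((*) \<epsilon>) x"
    using \<epsilon>(2) prim_circ_length[OF funpow_tau_in_prim_circ[OF assms]] by simp
  have "\<epsilon> = 1"
  proof (rule ccontr)
    assume "\<epsilon> \<noteq> 1"
    then have "(tau ^^ d) x = map uminus x"
      using \<epsilon>(1) tau_d by (auto simp: abs_if split: if_splits intro: map_cong)
    then show False
      using uminus_notin_prim_circ[OF assms] funpow_tau_in_prim_circ[OF assms] by metis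
  qed
  then show ?thesis
    using tau_d by (simp add: map_idI)
qed

lemma prim_circ_if_map_abs_eq:
  assumes z: "z \<in> prim_circ d" and abs_eq: "map abs w = map abs z"
    and a: "a < d" "\<forall>j<a. z ! j = 0" "0 < w ! a"
  shows "w \<in> prim_circ d"
proof -
  have len: "length w = d"
    using abs_eq prim_circ_length[OF z] by (metis length_map)
  have "Gcd (set w) = 1"
    using z abs_eq Gcd_set_map_abs[of w] Gcd_set_map_abs[of z]
    by (simp add: prim_circ_def primitive_pts_def)
  moreover have "\<forall>j<a. w ! j = 0"
    using a abs_eq len prim_circ_length[OF z] by (metis abs_0_eq nth_map order.strict_trans)
  ultimately show ?thesis
    using len a by (auto simp: prim_circ_def primitive_pts_def)
qed

definition tau_segment :: "nat \<Rightarrow> int list \<Rightarrow> int list set" where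
  "tau_segment n x = (\<lambda>k. (tau ^^ k) x) ` {..<n}"

lemma finite_tau_segment [simp]: "finite (tau_segment n x)"
  by (simp add: tau_segment_def)

lemma orbit_period:
  assumes "z \<in> prim_circ d"
  obtains p where "0 < p" "p dvd d" "(tau ^^ p) z = z" "inj_on (\<lambda>k. (tau ^^ k) z) {..<p}"
    "orbit z = tau_segment p z"
proof -
  have "0 < d"
    using prim_circ_not_Nil[OF assms] prim_circ_length[OF assms] by auto
  then show thesis
    using funpow_least_period[OF funpow_tau_self[OF assms]] that
    by (metis orbit_def tau_segment_def)
qed

section \<open>Column sums and the partition\<close>

lemma length_funpow_sigma [simp]: "v \<noteq> [] \<Longrightarrow> length ((sigma ^^ k) v) = length v"
  by (induction k) (auto simp: sigma_def)

lemma sum_funpow_sigma_nth: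
  assumes period: "(sigma ^^ p) v = v" and "i < length v"
  shows "(\<Sum>k<p. (sigma ^^ k) v ! i) = (\<Sum>k<p. (sigma ^^ k) v ! 0)"
  using assms(2)
proof (induction i)
  case (Suc i)
  have ne: "v \<noteq> []"
    using Suc.prems by auto
  have shift: "(sigma ^^ Suc k) v ! Suc i = (sigma ^^ k) v ! i" for k
    using Suc.prems nth_sigma_Suc[of i "(sigma ^^ k) v"] ne by simp
  have "(\<Sum>k<p. (sigma ^^ k) v ! Suc i) = (\<Sum>k<p. (sigma ^^ k) v ! i)"
  proof (cases p)
    case (Suc n)
    have "(\<Sum>k<p. (sigma ^^ k) v ! Suc i) = v ! Suc i + (\<Sum>k<n. (sigma ^^ k) v ! i)"
      unfolding Suc sum.lessThan_Suc_shift by (simp add: shift del: funpow.simps)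
    also have "v ! Suc i = (sigma ^^ n) v ! i"
      using shift[of n] period Suc by simp
    finally show ?thesis
      using Suc by (simp add: add.commute)
  qed simp
  then show ?case
    using Suc by simp
qed simp

lemma sum_abs_nth_tau_segment:
  assumes "x \<noteq> []" "inj_on (\<lambda>k. (tau ^^ k) x) {..<p}" "i < length x"
  shows "(\<Sum>y\<in>tau_segment p x. \<bar>y ! i\<bar>) = (\<Sum>k<p. (sigma ^^ k) (map abs x) ! i)"
proof -
  have "(\<Sum>y\<in>tau_segment p x. \<bar>y ! i\<bar>) = (\<Sum>k<p. map abs ((tau ^^ k) x) ! i)"
    unfolding tau_segment_def using assms by (simp add: sum.reindex)
  then show ?thesis
    by (simp add: map_abs_funpow_tau[OF assms(1)])
qed

lemma column_sum_tau_segment: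
  assumes period: "(tau ^^ p) z = z" and "z \<noteq> []"
    and "map abs x = map abs z" "inj_on (\<lambda>k. (tau ^^ k) x) {..<p}" "i < length z"
  shows "(\<Sum>y\<in>tau_segment p x. \<bar>y ! i\<bar>) = (\<Sum>k<p. (sigma ^^ k) (map abs z) ! 0)"
proof -
  have "x \<noteq> []" "i < length x"
    using assms by (auto dest: map_eq_imp_length_eq)
  then have "(\<Sum>y\<in>tau_segment p x. \<bar>y ! i\<bar>) = (\<Sum>k<p. (sigma ^^ k) (map abs z) ! i)"
    using assms sum_abs_nth_tau_segment by simp
  also have "\<dots> = (\<Sum>k<p. (sigma ^^ k) (map abs z) ! 0)"
    using map_abs_funpow_tau[OF \<open>z \<noteq> []\<close>, of p] period \<open>i < length z\<close>
    by (intro sum_funpow_sigma_nth) simp_all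
  finally show ?thesis .
qed

lemma kappa_orbit:
  assumes z: "z \<in> prim_circ d" and period: "(tau ^^ p) z = z"
    and inj: "inj_on (\<lambda>k. (tau ^^ k) z) {..<p}" and orbit: "orbit z = tau_segment p z"
  shows "kappa d (orbit z) = (\<Sum>k<p. (sigma ^^ k) (map abs z) ! 0)"
proof -
  have "0 < d"
    using prim_circ_not_Nil[OF z] prim_circ_length[OF z] by auto
  moreover have column: "(\<Sum>y\<in>orbit z. \<bar>y ! i\<bar>) = (\<Sum>k<p. (sigma ^^ k) (map abs z) ! 0)"
    if "i < d" for i
    unfolding orbit
    using column_sum_tau_segment[OF period prim_circ_not_Nil[OF z] refl inj] that
      prim_circ_length[OF z] by simp
  ultimately have "(\<lambda>i. \<Sum>y\<in>orbit z. \<bar>y ! i\<bar>) ` {..<d} = {\<Sum>k<p. (sigma ^^ k) (map abs z) ! 0}"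
    by force
  then show ?thesis
    by (simp add: kappa_def)
qed

definition segment_family :: "nat \<Rightarrow> int list \<Rightarrow> nat \<Rightarrow> nat \<Rightarrow> (nat \<Rightarrow> int list) \<Rightarrow> bool" where
  "segment_family d z p q w \<longleftrightarrow> q * p = d \<and> disjoint_family_on (\<lambda>j. tau_segment p (w j)) {..<q} \<and>
     (\<forall>j<q. w j \<in> prim_circ d \<and> map abs (w j) = map abs z \<and> inj_on (\<lambda>k. (tau ^^ k) (w j)) {..<p})"

lemma partition_on_disjoint_family:
  assumes "disjoint_family_on A I" "\<And>i. i \<in> I \<Longrightarrow> A i \<noteq> {}"
  shows "partition_on (\<Union> (A ` I)) (A ` I)" "inj_on A I"
proof -
  have "disjoint (A ` I)" "inj_on A I"
    using assms disjoint_family_on_iff_disjoint_image by blast+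
  then show "partition_on (\<Union> (A ` I)) (A ` I)" "inj_on A I"
    using assms(2) by (auto intro!: partition_onI dest: disjointD simp: disjnt_def)
qed

lemma tau_segment_properties:
  assumes z: "z \<in> prim_circ d" and period: "(tau ^^ p) z = z"
    and inj: "inj_on (\<lambda>k. (tau ^^ k) z) {..<p}" and orbit: "orbit z = tau_segment p z"
    and x: "x \<in> prim_circ d" "map abs x = map abs z" "inj_on (\<lambda>k. (tau ^^ k) x) {..<p}"
  shows "tau_segment p x \<subseteq> prim_circ d" "tau_segment p x \<subseteq> orbit x"
    "card (tau_segment p x) = card (orbit z)" "\<forall>y\<in>tau_segment p x. norm1 y = norm1 z"
    "\<forall>i<d. kappa d (orbit z) = (\<Sum>y\<in>tau_segment p x. \<bar>y ! i\<bar>)"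
proof -
  show "tau_segment p x \<subseteq> prim_circ d" "tau_segment p x \<subseteq> orbit x"
    "card (tau_segment p x) = card (orbit z)"
    using x inj orbit funpow_tau_in_prim_circ by (auto simp: tau_segment_def orbit_def card_image)
  have "norm1 x = norm1 z"
    using x(2) by (simp add: norm1_def)
  then show "\<forall>y\<in>tau_segment p x. norm1 y = norm1 z"
    using norm1_funpow_tau[OF prim_circ_not_Nil[OF x(1)]] by (auto simp: tau_segment_def)
  show "\<forall>i<d. kappa d (orbit z) = (\<Sum>y\<in>tau_segment p x. \<bar>y ! i\<bar>)"
    using column_sum_tau_segment[OF period prim_circ_not_Nil[OF z] x(2,3)] prim_circ_length[OF z]
      kappa_orbit[OF z period inj orbit] by simp
qed

lemma partition_of_segment_family:
  assumes z: "z \<in> prim_circ d" and p: "0 < p" and period: "(tau ^^ p) z = z"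
    and inj: "inj_on (\<lambda>k. (tau ^^ k) z) {..<p}" and orbit: "orbit z = tau_segment p z"
    and family: "segment_family d z p q w"
  shows "\<exists>K P. K \<subseteq> prim_circ d \<and> card K = d \<and> (\<forall>x\<in>K. norm1 x = norm1 z)
     \<and> partition_on K P \<and> card P = d div card (orbit z)
     \<and> (\<forall>L\<in>P. card L = card (orbit z)
          \<and> (\<forall>i<d. kappa d (orbit z) = (\<Sum>x\<in>L. \<bar>x ! i\<bar>))
          \<and> (\<exists>w\<in>prim_circ d. L \<subseteq> orbit w))"
proof -
  let ?L = "\<lambda>j. tau_segment p (w j)"
  have qp: "q * p = d" and disj: "disjoint_family_on ?L {..<q}"
    and w_prim: "\<And>j. j < q \<Longrightarrow> w j \<in> prim_circ d"
    and w_abs: "\<And>j. j < q \<Longrightarrow> map abs (w j) = map abs z"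
    and w_inj: "\<And>j. j < q \<Longrightarrow> inj_on (\<lambda>k. (tau ^^ k) (w j)) {..<p}"
    using family unfolding segment_family_def by auto
  note segment = tau_segment_properties[OF z period inj orbit w_prim w_abs w_inj]
  have card_orbit: "card (orbit z) = p"
    using orbit inj by (simp add: tau_segment_def card_image)
  have "partition_on (\<Union> (?L ` {..<q})) (?L ` {..<q})" "inj_on ?L {..<q}"
    using partition_on_disjoint_family[OF disj] p by (auto simp: tau_segment_def)
  moreover have "card (\<Union> (?L ` {..<q})) = d"
    using card_UN_disjoint'[OF disj] segment(3) card_orbit qp by simp
  moreover have "card (?L ` {..<q}) = d div card (orbit z)"
    using \<open>inj_on ?L {..<q}\<close> card_orbit p by (simp add: card_image flip: qp)
  ultimately show ?thesis
    using segment w_prim by (intro exI[of _ "\<Union> (?L ` {..<q})"] exI[of _ "?L ` {..<q}"]) (auto; blast)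
qed

section \<open>Choosing the orbit segments\<close>

lemma inj_on_funpow_tau_one_negative:
  assumes len: "length x = d"
    and b: "b < d" "x ! b < 0" "\<forall>m<d. x ! m < 0 \<longrightarrow> m = b"
    and ac: "a < d" "c < d" "a \<noteq> c" "0 < x ! a" "0 < x ! c"
  shows "inj_on (\<lambda>k. (tau ^^ k) x) {..<d}"
proof (rule inj_on_funpow_tau)
  show "x \<noteq> []"
    using b(1) len by auto
  fix r and \<epsilon> :: int
  assume r: "0 < r" "r < d" and \<epsilon>: "\<bar>\<epsilon>\<bar> = 1"
  show "rotate r x \<noteq> map ((*) \<epsilon>) x"
  proof
    assume symmetric: "rotate r x = map ((*) \<epsilon>) x"
    have shifted_negative: "(m + r) mod d = b" if "m < d" "\<epsilon> * x ! m < 0" for m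
    proof -
      have "x ! ((m + r) mod d) < 0"
        using nth_mod_if_rotate_eq[OF symmetric, of m] that len by simp
      moreover have "(m + r) mod d < d"
        using r by simp
      ultimately show ?thesis
        using b(3) by blast
    qed
    show False
    proof (cases "\<epsilon> = 1")
      case True
      then show False
        using shifted_negative[OF b(1)] b(1,2) add_mod_neq_self[OF b(1) r] by simp
    next
      case False
      then have "\<epsilon> = -1"
        using \<epsilon> by auto
      then have "(r + a) mod d = (r + c) mod d"
        using shifted_negative[of a] shifted_negative[of c] ac by (simp add: add.commute)
      then show False
        using add_mod_left_cancel ac by blast
    qed
  qed
qed

lemma inj_on_funpow_tau_two_support:
  assumes abs_eq: "map abs x = map abs z" and len: "length z = d"
    and a: "a < d" "z ! a \<noteq> 0" and p: "p < d"
    and support: "\<forall>m<d. z ! m \<noteq> 0 \<longrightarrow> m = a \<or> m = (a + p) mod d"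
  shows "inj_on (\<lambda>k. (tau ^^ k) x) {..<p}"
proof (rule inj_on_funpow_tau)
  have abs_nth: "\<bar>x ! m\<bar> = \<bar>z ! m\<bar>" if "m < d" for m
    using abs_nth_eq_if_map_abs_eq[OF abs_eq] that len by simp
  have len_x: "length x = d"
    using map_eq_imp_length_eq[OF abs_eq] len by simp
  then show "x \<noteq> []"
    using a(1) by auto
  fix r and \<epsilon> :: int
  assume r: "0 < r" "r < p" and \<epsilon>: "\<bar>\<epsilon>\<bar> = 1"
  show "rotate r x \<noteq> map ((*) \<epsilon>) x"
  proof
    assume symmetric: "rotate r x = map ((*) \<epsilon>) x"
    have "(a + r) mod d < d"
      using p by simp
    moreover have "x ! ((a + r) mod d) \<noteq> 0"
      using nth_mod_if_rotate_eq[OF symmetric, of a] a len_x \<epsilon> abs_nth[OF a(1)] by auto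
    ultimately have "z ! ((a + r) mod d) \<noteq> 0"
      using abs_nth by fastforce
    then have "(a + r) mod d = a \<or> (a + r) mod d = (a + p) mod d"
      using support \<open>(a + r) mod d < d\<close> by blast
    then have "(a + r) mod d = (a + p) mod d"
      using add_mod_neq_self[of a d r] a(1) r p by auto
    then have "r = p"
      by (rule add_mod_left_cancel) (use r p in auto)
    then show False
      using r by simp
  qed
qed

lemma tau_segments_disjoint_if_sign_coherent:
  assumes "x \<noteq> []" "y \<noteq> []" "sign_coherent x" "\<not> sign_coherent y"
  shows "tau_segment m x \<inter> tau_segment n y = {}"
  using assms sign_coherent_funpow_tau[of x] sign_coherent_funpow_tau[of y]
  by (auto simp: tau_segment_def) metis

lemma sign_variants_in_prim_circ:
  assumes z: "z \<in> prim_circ d" and a: "a < d" "0 < z ! a" "\<forall>j<a. z ! j = 0"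
    and b: "b \<noteq> a"
  shows "map abs z \<in> prim_circ d" "(map abs z)[b := - \<bar>z ! b\<bar>] \<in> prim_circ d"
    "map abs ((map abs z)[b := - \<bar>z ! b\<bar>]) = map abs z"
proof -
  have len: "length z = d"
    using prim_circ_length[OF z] .
  show abs_eq: "map abs ((map abs z)[b := - \<bar>z ! b\<bar>]) = map abs z"
    by (cases "b < length z") (auto intro!: nth_equalityI simp: nth_list_update)
  show "map abs z \<in> prim_circ d"
    using a len by (intro prim_circ_if_map_abs_eq[OF z _ a(1,3)]) simp_all
  show "(map abs z)[b := - \<bar>z ! b\<bar>] \<in> prim_circ d"
    using a b len by (intro prim_circ_if_map_abs_eq[OF z abs_eq a(1,3)]) simp
qed

lemma double_period:
  assumes len: "length z = d" and a: "a < d" "z ! a \<noteq> 0" and p: "0 < p" "p < d"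
    and period: "(tau ^^ p) z = z"
    and support: "\<forall>m<d. z ! m \<noteq> 0 \<longrightarrow> m = a \<or> m = (a + p) mod d"
  shows "d = 2 * p"
proof -
  define b where "b = (a + p) mod d"
  have b: "b < d" "z ! b \<noteq> 0"
    using abs_nth_add_period[OF period, of a] a len p by (auto simp: b_def)
  then have "z ! ((b + p) mod d) \<noteq> 0" "(b + p) mod d < d"
    using abs_nth_add_period[OF period, of b] len p by auto
  then have "(b + p) mod d = a"
    using support add_mod_neq_self[OF b(1) p] unfolding b_def by blast
  then have "(a + 2 * p) mod d = a mod d"
    using a(1) by (simp add: b_def mod_add_left_eq add.assoc mult_2)
  then have "d dvd 2 * p"
    using mod_eq_dvd_iff_nat[of a "a + 2 * p" d] by simp
  then obtain c where c: "2 * p = d * c"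
    by blast
  have "d * c < d * 2"
    using c p by linarith
  then have "c < 2"
    by simp
  moreover have "c \<noteq> 0"
  proof
    assume "c = 0"
    with c p show False
      by simp
  qed
  ultimately show ?thesis
    using c by (simp add: less_2_cases_iff)
qed

lemma segment_family_of_full_orbit:
  assumes x: "x \<in> prim_circ d" "map abs x = map abs z" "inj_on (\<lambda>k. (tau ^^ k) x) {..<d}"
    and period: "(tau ^^ p) z = z" and "z \<noteq> []" and qp: "q * p = d"
  shows "segment_family d z p q (\<lambda>j. (tau ^^ (j * p)) x)"
proof -
  have collision: "k = k' \<and> j = j'"
    if "(tau ^^ k) ((tau ^^ (j * p)) x) = (tau ^^ k') ((tau ^^ (j' * p)) x)"
      "k < p" "k' < p" "j < q" "j' < q" for k k' j j'
  proof -
    have "(tau ^^ (k + j * p)) x = (tau ^^ (k' + j' * p)) x"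
      using that(1) by (simp add: funpow_add)
    then have "k + j * p = k' + j' * p"
      using inj_onD[OF x(3)] add_mult_less[of _ p _ q] that(2-5) qp by simp
    then show ?thesis
      using add_mult_eq_imp_eq that(2,3) by blast
  qed
  have "(sigma ^^ p) (map abs z) = map abs z"
    using map_abs_funpow_tau[OF \<open>z \<noteq> []\<close>, of p] period by simp
  then have "(sigma ^^ (j * p)) (map abs z) = map abs z" for j
    using funpow_mod_eq[where f = sigma and n = p and m = "j * p"] by simp
  then have "map abs ((tau ^^ (j * p)) x) = map abs z" for j
    using map_abs_funpow_tau[OF prim_circ_not_Nil[OF x(1)]] x(2) by simp
  moreover have "inj_on (\<lambda>k. (tau ^^ k) ((tau ^^ (j * p)) x)) {..<p}" if "j < q" for j
    using collision that by (intro inj_onI) simp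
  moreover have "disjoint_family_on (\<lambda>j. tau_segment p ((tau ^^ (j * p)) x)) {..<q}"
    unfolding disjoint_family_on_def tau_segment_def using collision by blast
  ultimately show ?thesis
    using funpow_tau_in_prim_circ[OF x(1)] qp by (simp add: segment_family_def)
qed

lemma segment_family_two_support:
  assumes z: "z \<in> prim_circ d" and a: "a < d" "0 < z ! a" "\<forall>j<a. z ! j = 0"
    and p: "0 < p" "p < d" and period: "(tau ^^ p) z = z"
    and support: "\<forall>m<d. z ! m \<noteq> 0 \<longrightarrow> m = a \<or> m = (a + p) mod d"
  defines "b \<equiv> (a + p) mod d"
  shows "segment_family d z p 2
    (\<lambda>j. if j = 0 then map abs z else (map abs z)[b := - \<bar>z ! b\<bar>])"
proof -
  have len: "length z = d"
    using prim_circ_length[OF z] .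
  have "b \<noteq> a" "b < d"
    using add_mod_neq_self[OF a(1) p] p by (simp_all add: b_def)
  have "z ! b \<noteq> 0"
    using abs_nth_add_period[OF period, of a] a len by (auto simp: b_def)
  define w where "w = (map abs z)[b := - \<bar>z ! b\<bar>]"
  note variants = sign_variants_in_prim_circ[OF z a \<open>b \<noteq> a\<close>, folded w_def]
  have inj: "inj_on (\<lambda>k. (tau ^^ k) x) {..<p}" if "map abs x = map abs z" for x
    using inj_on_funpow_tau_two_support[OF that len a(1)] a(2) p(2) support by simp
  have "sign_coherent (map abs z)"
    by (auto simp: sign_coherent_def)
  moreover have "\<not> sign_coherent w"
  proof -
    have "length w = d"
      using len by (simp add: w_def)
    then have "w ! a \<in> set w" "w ! b \<in> set w"
      using a(1) \<open>b < d\<close> by simp_all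
    moreover have "w ! a * w ! b < 0"
      using a \<open>b \<noteq> a\<close> \<open>z ! b \<noteq> 0\<close> \<open>b < d\<close> len by (simp add: w_def mult_pos_neg)
    ultimately show ?thesis
      unfolding sign_coherent_def by fastforce
  qed
  moreover have "map abs z \<noteq> []" "w \<noteq> []"
    using len a(1) by (auto simp: w_def)
  ultimately have "tau_segment p (map abs z) \<inter> tau_segment p w = {}"
    by (intro tau_segments_disjoint_if_sign_coherent)
  then have
    "disjoint_family_on (\<lambda>j::nat. tau_segment p (if j = 0 then map abs z else w)) {..<2}"
    by (auto simp: disjoint_family_on_def less_2_cases_iff)
  moreover have "2 * p = d"
    using double_period[OF len a(1) _ p period support] a(2) by simp
  ultimately show ?thesis
    using variants inj unfolding segment_family_def w_def[symmetric]
    by (auto simp: less_2_cases_iff)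
qed

lemma exists_segment_family:
  assumes z: "z \<in> prim_circ d" and p: "0 < p" "p dvd d" and period: "(tau ^^ p) z = z"
    and inj: "inj_on (\<lambda>k. (tau ^^ k) z) {..<p}"
  shows "\<exists>q w. segment_family d z p q w"
proof (cases "p = d")
  case True
  then have "segment_family d z p 1 (\<lambda>_. z)"
    using z inj by (simp add: segment_family_def disjoint_family_on_def)
  then show ?thesis
    by blast
next
  case False
  have len: "length z = d"
    using prim_circ_length[OF z] .
  then have "0 < d"
    using prim_circ_not_Nil[OF z] by auto
  then have "p < d"
    using dvd_imp_le[OF p(2)] False by simp
  obtain a where a: "a < d" "0 < z ! a" "\<forall>j<a. z ! j = 0"
    using z by (auto simp: prim_circ_def)
  define b where "b = (a + p) mod d"
  have b: "b < d" "b \<noteq> a" "z ! b \<noteq> 0"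
    using add_mod_neq_self[OF a(1) p(1) \<open>p < d\<close>] abs_nth_add_period[OF period, of a] a len
    by (auto simp: b_def)
  show ?thesis
  proof (cases "\<exists>c<d. z ! c \<noteq> 0 \<and> c \<noteq> a \<and> c \<noteq> b")
    case True
    then obtain c where c: "c < d" "z ! c \<noteq> 0" "c \<noteq> a" "c \<noteq> b"
      by blast
    define x where "x = (map abs z)[b := - \<bar>z ! b\<bar>]"
    note variants = sign_variants_in_prim_circ[OF z a b(2), folded x_def]
    have "inj_on (\<lambda>k. (tau ^^ k) x) {..<d}"
      by (rule inj_on_funpow_tau_one_negative[of x d b a c])
        (use a b c len in \<open>auto simp: x_def nth_list_update\<close>)
    then have "segment_family d z p (d div p) (\<lambda>j. (tau ^^ (j * p)) x)"
      using segment_family_of_full_orbit variants(2,3) period prim_circ_not_Nil[OF z] p by simp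
    then show ?thesis
      by blast
  next
    case False
    then show ?thesis
      using segment_family_two_support[OF z a p(1) \<open>p < d\<close> period] b_def by blast
  qed
qed

theorem proposition6p1:
  fixes d :: nat and z :: "int list"
  assumes "d > 0" and "z \<in> prim_circ d"
  shows "\<exists>K P. K \<subseteq> prim_circ d \<and> card K = d \<and> (\<forall>x\<in>K. norm1 x = norm1 z)
     \<and> partition_on K P \<and> card P = d div card (orbit z)
     \<and> (\<forall>L\<in>P. card L = card (orbit z)
          \<and> (\<forall>i<d. kappa d (orbit z) = (\<Sum>x\<in>L. \<bar>x ! i\<bar>))
          \<and> (\<exists>w\<in>prim_circ d. L \<subseteq> orbit w))"
proof -
  obtain p where p: "0 < p" "p dvd d" "(tau ^^ p) z = z" "inj_on (\<lambda>k. (tau ^^ k) z) {..<p}"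
    and orbit: "orbit z = tau_segment p z"
    using orbit_period[OF assms(2)] .
  obtain q w where "segment_family d z p q w"
    using exists_segment_family[OF assms(2) p] by blast
  then show ?thesis
    by (rule partition_of_segment_family[OF assms(2) p(1,3,4) orbit])
qed

end
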